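(* An orientation $O$ of an interval hypergraph $\mathcal{I}$ on $[n]$ is acyclic if and only if there are no $I,J\in\mathcal{I}$ with $O(I)\in J\setminus\{O(J)\}$ and $O(J)\in I\setminus\{O(I)\}$.
   Context: An interval hypergraph $\mathcal{I}$ on $[n]$ is a collection of intervals $[i,j]=\{i,\dots,j\}$ of $[n]$ containing all singletons. An orientation is a map $O:\mathcal{I}\to[n]$ with $O(I)\in I$ for all $I$; it is acyclic if there are no $H_1,\dots,H_k\in\mathcal{I}$, $k\ge2$, with $O(H_{i+1})\in H_i\setminus\{O(H_i)\}$ for $i\in[k-1]$ and $O(H_1)\in H_k\setminus\{O(H_k)\}$. *)

theory Defs
  imports Main
begin

definition interval_hypergraph :: "nat \<Rightarrow> nat set set \<Rightarrow> bool" where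
  "interval_hypergraph n \<I> \<longleftrightarrow>
     (\<forall>I\<in>\<I>. \<exists>i j. 1 \<le> i \<and> i \<le> j \<and> j \<le> n \<and> I = {i..j}) \<and>
     (\<forall>i\<in>{1..n}. {i} \<in> \<I>)"

definition orientation :: "nat set set \<Rightarrow> (nat set \<Rightarrow> nat) \<Rightarrow> bool" where
  "orientation \<I> Or \<longleftrightarrow> (\<forall>I\<in>\<I>. Or I \<in> I)"

definition acyclic_orientation :: "nat set set \<Rightarrow> (nat set \<Rightarrow> nat) \<Rightarrow> bool" where
  "acyclic_orientation \<I> Or \<longleftrightarrow>
     \<not> (\<exists>Hs. 2 \<le> length Hs \<and> set Hs \<subseteq> \<I> \<and>
          (\<forall>i. i + 1 < length Hs \<longrightarrow> Or (Hs ! (i + 1)) \<in> Hs ! i - {Or (Hs ! i)}) \<and>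
          Or (Hs ! 0) \<in> last Hs - {Or (last Hs)})"

end

theory Submission
  imports Defs
begin

text \<open>Rotate a cycle so that its first hyperedge \<open>M\<close> has the largest orientation point,
  and let \<open>P\<close> and \<open>N\<close> be its predecessor and successor, so that \<open>O(M) \<in> P\<close> and \<open>O(N) \<in> M\<close>.
  Since hyperedges are intervals: if \<open>O(N) \<le> O(P)\<close>, then \<open>O(P)\<close> lies in \<open>M\<close> between \<open>O(N)\<close>
  and \<open>O(M)\<close>, so \<open>P, M\<close> is a cycle of length two; otherwise \<open>O(N)\<close> lies in \<open>P\<close> between
  \<open>O(P)\<close> and \<open>O(M)\<close>, so \<open>M\<close> can be skipped and induction on the length applies.\<close>

definition order_convex :: "'a::order set \<Rightarrow> bool" where
  "order_convex S \<longleftrightarrow> (\<forall>x\<in>S. \<forall>y\<in>S. \<forall>z. x \<le> z \<and> z \<le> y \<longrightarrow> z \<in> S)"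

definition arc :: "('a set \<Rightarrow> 'a) \<Rightarrow> 'a set \<Rightarrow> 'a set \<Rightarrow> bool" where
  "arc Or H H' \<longleftrightarrow> Or H' \<in> H - {Or H}"

definition oriented_cycle :: "'a set set \<Rightarrow> ('a set \<Rightarrow> 'a) \<Rightarrow> 'a set list \<Rightarrow> bool" where
  "oriented_cycle \<I> Or Hs \<longleftrightarrow>
     Hs \<noteq> [] \<and> set Hs \<subseteq> \<I> \<and> successively (arc Or) Hs \<and> arc Or (last Hs) (hd Hs)"

lemma order_convexD: "order_convex S \<Longrightarrow> x \<in> S \<Longrightarrow> y \<in> S \<Longrightarrow> x \<le> z \<Longrightarrow> z \<le> y \<Longrightarrow> z \<in> S"
  unfolding order_convex_def by blast

lemma interval_hypergraph_order_convex:
  assumes "interval_hypergraph n \<I>" "I \<in> \<I>"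
  shows "order_convex I"
  using assms unfolding interval_hypergraph_def order_convex_def by fastforce

lemma not_arc_self: "\<not> arc Or H H"
  by (simp add: arc_def)

lemma oriented_cycle_length_ge_2:
  assumes "oriented_cycle \<I> Or Hs"
  shows "2 \<le> length Hs"
proof (rule ccontr)
  assume "\<not> 2 \<le> length Hs"
  with assms obtain H where "Hs = [H]"
    by (cases Hs) (auto simp: oriented_cycle_def Suc_le_eq)
  with assms show False
    by (simp add: oriented_cycle_def not_arc_self)
qed

lemma acyclic_orientation_iff_no_oriented_cycle:
  "acyclic_orientation \<I> Or \<longleftrightarrow> \<not> (\<exists>Hs. oriented_cycle \<I> Or Hs)"
proof -
  have "(2 \<le> length Hs \<and> set Hs \<subseteq> \<I> \<and>
          (\<forall>i. i + 1 < length Hs \<longrightarrow> Or (Hs ! (i + 1)) \<in> Hs ! i - {Or (Hs ! i)}) \<and>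
          Or (Hs ! 0) \<in> last Hs - {Or (last Hs)})
        \<longleftrightarrow> oriented_cycle \<I> Or Hs" for Hs
    using oriented_cycle_length_ge_2[of \<I> Or Hs]
    by (cases Hs) (auto simp: oriented_cycle_def successively_conv_nth arc_def)
  then show ?thesis
    unfolding acyclic_orientation_def by presburger
qed

lemma oriented_cycle_rotate1:
  assumes "oriented_cycle \<I> Or Hs"
  shows "oriented_cycle \<I> Or (rotate1 Hs)"
  using assms
  by (cases Hs) (auto simp: oriented_cycle_def successively_append_iff successively_Cons hd_append)

lemma oriented_cycle_rotate:
  "oriented_cycle \<I> Or Hs \<Longrightarrow> oriented_cycle \<I> Or (rotate n Hs)"
  by (induction n) (simp_all add: oriented_cycle_rotate1)

lemma oriented_cycle_skip_head:
  assumes "oriented_cycle \<I> Or (H # Hs)" "Hs \<noteq> []" "arc Or (last Hs) (hd Hs)"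
  shows "oriented_cycle \<I> Or Hs"
  using assms by (auto simp: oriented_cycle_def successively_Cons)

lemma oriented_cycle_starting_at_max:
  fixes Or :: "'a::linorder set \<Rightarrow> 'a"
  assumes "oriented_cycle \<I> Or Hs"
  obtains M Hs' where "oriented_cycle \<I> Or (M # Hs')" "length Hs' + 1 = length Hs"
    "\<And>H. H \<in> set Hs' \<Longrightarrow> Or H \<le> Or M"
proof -
  have "Hs \<noteq> []"
    using assms by (simp add: oriented_cycle_def)
  then have "Max (Or ` set Hs) \<in> Or ` set Hs"
    by (intro Max_in) auto
  then obtain M where M: "M \<in> set Hs" "Or M = Max (Or ` set Hs)"
    by (metis imageE)
  obtain ys zs where Hs: "Hs = ys @ M # zs"
    using split_list[OF M(1)] by blast
  have "oriented_cycle \<I> Or (M # zs @ ys)"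
    using oriented_cycle_rotate[OF assms, of "length ys"] by (simp add: Hs rotate_append)
  moreover have "Or H \<le> Or M" if "H \<in> set Hs" for H
    using that by (auto simp: M(2) intro!: Max_ge)
  ultimately show thesis
    using that[of M "zs @ ys"] by (auto simp: Hs)
qed

lemma oriented_cycle_has_2_cycle:
  fixes Or :: "'a::linorder set \<Rightarrow> 'a"
  assumes convex: "\<And>H. H \<in> \<I> \<Longrightarrow> order_convex H"
    and orientation: "\<And>H. H \<in> \<I> \<Longrightarrow> Or H \<in> H"
    and "oriented_cycle \<I> Or Hs"
  shows "\<exists>I\<in>\<I>. \<exists>J\<in>\<I>. arc Or I J \<and> arc Or J I"
  using assms(3)
proof (induction "length Hs" arbitrary: Hs rule: less_induct)
  case less
  obtain M Hs' where cycle: "oriented_cycle \<I> Or (M # Hs')"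
    and length: "length Hs' + 1 = length Hs" and max: "\<And>H. H \<in> set Hs' \<Longrightarrow> Or H \<le> Or M"
    using oriented_cycle_starting_at_max[OF less.prems] by blast
  have "Hs' \<noteq> []"
    using oriented_cycle_length_ge_2[OF cycle] by auto
  define N P where "N = hd Hs'" and "P = last Hs'"
  have in_\<I>: "M \<in> \<I>" "N \<in> \<I>" "P \<in> \<I>"
    using cycle \<open>Hs' \<noteq> []\<close> by (auto simp: oriented_cycle_def N_def P_def)
  have MN: "arc Or M N" and PM: "arc Or P M"
    using cycle \<open>Hs' \<noteq> []\<close> by (auto simp: oriented_cycle_def successively_Cons N_def P_def)
  have "Or N \<le> Or M" "Or P \<le> Or M"
    using max \<open>Hs' \<noteq> []\<close> by (simp_all add: N_def P_def)
  show ?case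
  proof (cases "Or N \<le> Or P")
    case True
    have "Or N \<in> M"
      using MN by (simp add: arc_def)
    then have "Or P \<in> M"
      using order_convexD[OF convex[OF in_\<I>(1)] _ orientation[OF in_\<I>(1)] True \<open>Or P \<le> Or M\<close>]
      by blast
    then have "arc Or M P"
      using PM by (auto simp: arc_def)
    with PM in_\<I> show ?thesis by blast
  next
    case False
    then have "Or P \<le> Or N"
      by simp
    moreover have "Or M \<in> P"
      using PM by (simp add: arc_def)
    ultimately have "Or N \<in> P"
      using order_convexD[OF convex[OF in_\<I>(3)] orientation[OF in_\<I>(3)]] \<open>Or N \<le> Or M\<close> by blast
    then have "arc Or P N"
      using False by (auto simp: arc_def)
    then have "oriented_cycle \<I> Or Hs'"
      using oriented_cycle_skip_head[OF cycle \<open>Hs' \<noteq> []\<close>] by (simp add: N_def P_def)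
    moreover have "length Hs' < length Hs"
      using length by simp
    ultimately show ?thesis
      using less.hyps by blast
  qed
qed

lemma ex_oriented_cycle_iff_ex_2_cycle:
  fixes Or :: "'a::linorder set \<Rightarrow> 'a"
  assumes "\<And>H. H \<in> \<I> \<Longrightarrow> order_convex H"
    and "\<And>H. H \<in> \<I> \<Longrightarrow> Or H \<in> H"
  shows "(\<exists>Hs. oriented_cycle \<I> Or Hs) \<longleftrightarrow> (\<exists>I\<in>\<I>. \<exists>J\<in>\<I>. arc Or I J \<and> arc Or J I)"
proof
  assume "\<exists>Hs. oriented_cycle \<I> Or Hs"
  then show "\<exists>I\<in>\<I>. \<exists>J\<in>\<I>. arc Or I J \<and> arc Or J I"
    using oriented_cycle_has_2_cycle[OF assms] by blast
next
  assume "\<exists>I\<in>\<I>. \<exists>J\<in>\<I>. arc Or I J \<and> arc Or J I"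
  then obtain I J where "I \<in> \<I>" "J \<in> \<I>" "arc Or I J" "arc Or J I"
    by blast
  then have "oriented_cycle \<I> Or [I, J]"
    by (simp add: oriented_cycle_def)
  then show "\<exists>Hs. oriented_cycle \<I> Or Hs" ..
qed

theorem proposition3p6:
  fixes n :: nat and \<I> :: "nat set set" and Or :: "nat set \<Rightarrow> nat"
  assumes "interval_hypergraph n \<I>"
    and "orientation \<I> Or"
  shows "acyclic_orientation \<I> Or \<longleftrightarrow>
         \<not> (\<exists>I\<in>\<I>. \<exists>J\<in>\<I>. Or I \<in> J - {Or J} \<and> Or J \<in> I - {Or I})"
proof -
  have "(\<exists>Hs. oriented_cycle \<I> Or Hs) \<longleftrightarrow> (\<exists>I\<in>\<I>. \<exists>J\<in>\<I>. arc Or I J \<and> arc Or J I)"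
    using ex_oriented_cycle_iff_ex_2_cycle interval_hypergraph_order_convex[OF assms(1)] assms(2)
    unfolding orientation_def by blast
  then show ?thesis
    unfolding acyclic_orientation_iff_no_oriented_cycle by (auto simp: arc_def)
qed

end
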